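(* Fix $n\ge1$. There exist $c_n>0$ and $\kappa_0>0$ such that for all $0<\kappa<\kappa_0$: for every $j$ with $|j|\le k-1$ and $I_j\neq\emptyset$, $$\min_{x\in I_j}\psi_{n,j}(x)\ge c_n\kappa,$$ and moreover $\psi_{n,k}(a_k)\ge c_n\kappa$ and $\psi_{n,-k}(-a_k)\ge c_n\kappa$.
   Context: Fix $n\ge1$. Let $h_n$ be the physicists' Hermite polynomial $h_n(y)=(-1)^ne^{y^2}\frac{d^n}{dy^n}e^{-y^2}$, $\varphi(y)=e^{-y^2/2}$, $\Psi_n=h_n\varphi$. Let $0\le z_1<z_2<\dots<z_k$ be the nonnegative zeros of $h_n$, where $k=n/2$ if $n$ is even (then $z_1>0$) and $k=(n+1)/2$ if $n$ is odd (then $z_1=0$). For $\kappa>0$ define: $a_1=\lfloor z_1/\kappa\rfloor+1$; $\beta_1=1$ if $z_1=0$ and $\beta_1=z_1/(\kappa(a_1-1))$ otherwise; for $2\le j\le k$, $a_j=\lfloor z_j/(\beta_{j-1}\kappa)\rfloor+1$ and $\beta_j=z_j/(\kappa(a_j-1))$; for $1\le j\le k-1$, $b_j=\lfloor z_{j+1}/(\beta_j\kappa)\rfloor-1$, and $b_k=\infty$. Set $I_j=[a_j,b_j]\cap\mathbb{Z}$ for $1\le j\le k$ (so $I_k=[a_k,\infty)\cap\mathbb{Z}$), $I_{-j}=[-b_j,-a_j]\cap\mathbb{Z}$ and $\beta_{-j}=\beta_j$. If $n$ is even, put $b_0=a_1-2$, $I_0=[-b_0,b_0]\cap\mathbb{Z}$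 and $\beta_0=1$; if $n$ is odd, $I_0=\emptyset$. For $x\in I_j$ set $\psi_{n,j}(x)=|h_n(\beta_j\kappa x)|\,\varphi(\beta_j\kappa x)$. *)

theory Defs
  imports "HOL-Analysis.Analysis"
begin

definition hermite :: "nat \<Rightarrow> real \<Rightarrow> real" where
  "hermite n y = (-1) ^ n * exp (y^2) * (deriv ^^ n) (\<lambda>t. exp (- (t^2))) y"

definition gauss :: "real \<Rightarrow> real" where
  "gauss y = exp (- (y^2) / 2)"

definition hzeros :: "nat \<Rightarrow> real list" where
  "hzeros n = sorted_list_of_set {y::real. 0 \<le> y \<and> hermite n y = 0}"

definition hz :: "nat \<Rightarrow> nat \<Rightarrow> real" where
  "hz n j = hzeros n ! (j - 1)"

definition hk :: "nat \<Rightarrow> nat" where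
  "hk n = (if even n then n div 2 else (n + 1) div 2)"

text \<open>The pair (a_j, beta_j) for j \<ge> 1 (value at 0 is a dummy).\<close>
fun hab :: "nat \<Rightarrow> real \<Rightarrow> nat \<Rightarrow> int \<times> real" where
  "hab n \<kappa> 0 = (0, 1)"
| "hab n \<kappa> (Suc 0) =
     (let a = \<lfloor>hz n 1 / \<kappa>\<rfloor> + 1
      in (a, if hz n 1 = 0 then 1 else hz n 1 / (\<kappa> * real_of_int (a - 1))))"
| "hab n \<kappa> (Suc (Suc j)) =
     (let \<beta> = snd (hab n \<kappa> (Suc j));
          a = \<lfloor>hz n (j + 2) / (\<beta> * \<kappa>)\<rfloor> + 1
      in (a, hz n (j + 2) / (\<kappa> * real_of_int (a - 1))))"

definition ha :: "nat \<Rightarrow> real \<Rightarrow> nat \<Rightarrow> int" where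
  "ha n \<kappa> j = fst (hab n \<kappa> j)"

definition hbeta :: "nat \<Rightarrow> real \<Rightarrow> int \<Rightarrow> real" where
  "hbeta n \<kappa> j = (if j = 0 then 1 else snd (hab n \<kappa> (nat \<bar>j\<bar>)))"

text \<open>b_j for 1 \<le> j \<le> k-1 (b_k = infinity is handled in hI).\<close>
definition hb :: "nat \<Rightarrow> real \<Rightarrow> nat \<Rightarrow> int" where
  "hb n \<kappa> j = \<lfloor>hz n (j + 1) / (snd (hab n \<kappa> j) * \<kappa>)\<rfloor> - 1"

definition hI :: "nat \<Rightarrow> real \<Rightarrow> int \<Rightarrow> int set" where
  "hI n \<kappa> j =
    (if j = 0 then
       (if even n then {x. - (ha n \<kappa> 1 - 2) \<le> x \<and> x \<le> ha n \<kappa> 1 - 2} else {})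
     else if j > 0 then
       (if nat j = hk n then {x. ha n \<kappa> (nat j) \<le> x}
        else {x. ha n \<kappa> (nat j) \<le> x \<and> x \<le> hb n \<kappa> (nat j)})
     else
       (if nat (- j) = hk n then {x. x \<le> - ha n \<kappa> (nat (- j))}
        else {x. - hb n \<kappa> (nat (- j)) \<le> x \<and> x \<le> - ha n \<kappa> (nat (- j))}))"

definition hpsi :: "nat \<Rightarrow> real \<Rightarrow> int \<Rightarrow> int \<Rightarrow> real" where
  "hpsi n \<kappa> j x = \<bar>hermite n (hbeta n \<kappa> j * \<kappa> * real_of_int x)\<bar>
                    * gauss (hbeta n \<kappa> j * \<kappa> * real_of_int x)"

end

theory Submission
  imports Defs "HOL-Real_Asymp.Real_Asymp"
begin

text \<open>
  Up to sign, h_n(y) exp(-y^2) is the n-th derivative of exp(-y^2). Since h_n(y) exp(-y^2)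
  vanishes at both infinities, Rolle's theorem gives h_{n+1} a zero left of, right of, and between
  any two consecutive zeros of h_n, so h_n has n simple real zeros. Writing h_n = c \<Prod>(y - r),
  at most one factor is smaller than half the minimal gap between zeros; hence |h_n(y)| \<ge> C \<kappa>
  whenever y keeps distance \<kappa> from all zeros, and on a bounded set the Gaussian factor is
  bounded below.

  For small \<kappa> each \<beta>_j arises from \<beta>_{j-1} by rounding
  z_j / (\<beta>_{j-1} \<kappa>) down, so 1 \<le> \<beta>_j \<le> 2^j and \<kappa> (a_j - 1) \<beta>_j = z_j. Therefore \<beta>_j \<kappa> x
  lies in [z_j + \<beta>_j \<kappa>, z_{j+1} - \<beta>_j \<kappa>] for x \<in> I_j, \<kappa> x lies in [\<kappa> - z_1, z_1 - \<kappa>] for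
  x \<in> I_0, and \<beta>_k \<kappa> a_k = z_k + \<beta>_k \<kappa>: all these points are at distance at least \<kappa> from the
  zeros and bounded by z_k + 1. Negative indices follow from the parity of h_n.
\<close>

section \<open>Hermite polynomials\<close>

fun hermite_poly :: "nat \<Rightarrow> real poly" where
  "hermite_poly 0 = 1"
| "hermite_poly (Suc n) = [:0, 2:] * hermite_poly n - pderiv (hermite_poly n)"

lemma DERIV_poly_times_exp_neg_square:
  "((\<lambda>t. poly p t * exp (- (t^2))) has_real_derivative
      poly (pderiv p - [:0, 2:] * p) t * exp (- (t^2))) (at t)"
proof -
  have "((\<lambda>t. poly p t * exp (- (t^2))) has_real_derivative
      poly (pderiv p) t * exp (- (t^2)) + poly p t * (exp (- (t^2)) * (- (2 * t)))) (at t)"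
    by (auto intro!: derivative_eq_intros poly_DERIV)
  then show ?thesis by (simp add: algebra_simps)
qed

lemma DERIV_hermite_poly_times_exp_neg_square:
  "((\<lambda>t. poly (hermite_poly n) t * exp (- (t^2))) has_real_derivative
      - (poly (hermite_poly (Suc n)) t * exp (- (t^2)))) (at t)"
  using DERIV_poly_times_exp_neg_square[of "hermite_poly n" t] by (simp add: algebra_simps)

lemma higher_deriv_exp_neg_square:
  "(deriv ^^ n) (\<lambda>t. exp (- (t^2))) =
     (\<lambda>t. (-1) ^ n * (poly (hermite_poly n) t * exp (- (t^2))))"
proof (induction n)
  case 0
  show ?case by simp
next
  case (Suc n)
  have "deriv (\<lambda>t. (-1) ^ n * (poly (hermite_poly n) t * exp (- (t^2)))) t =
      (-1) ^ Suc n * (poly (hermite_poly (Suc n)) t * exp (- (t^2)))" for t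
    by (rule DERIV_imp_deriv)
      (use DERIV_cmult[OF DERIV_hermite_poly_times_exp_neg_square, of "(-1) ^ n" n t] in simp)
  then show ?case
    using Suc.IH by auto
qed

lemma hermite_eq_poly: "hermite n y = poly (hermite_poly n) y"
  unfolding hermite_def higher_deriv_exp_neg_square by (simp add: exp_minus mult_ac flip: power_add)

lemma hermite_poly_degree_lead_coeff:
  "degree (hermite_poly n) = n \<and> coeff (hermite_poly n) n = 2 ^ n"
proof (induction n)
  case 0
  show ?case by simp
next
  case (Suc n)
  have lead: "coeff (hermite_poly (Suc n)) (Suc n) = 2 ^ Suc n"
    using Suc.IH by (simp add: coeff_pderiv coeff_eq_0)
  have "degree ([:0, 2:] * hermite_poly n) \<le> Suc n" "degree (pderiv (hermite_poly n)) \<le> Suc n"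
    using degree_mult_le[of "[:0, 2:]" "hermite_poly n"] Suc.IH by (auto simp: degree_pderiv)
  then have "degree (hermite_poly (Suc n)) \<le> Suc n"
    by (simp only: hermite_poly.simps degree_diff_le)
  moreover have "Suc n \<le> degree (hermite_poly (Suc n))"
    using lead by (intro le_degree) simp
  ultimately have "degree (hermite_poly (Suc n)) = Suc n"
    by (rule antisym)
  with lead show ?case
    by blast
qed

lemma degree_hermite_poly: "degree (hermite_poly n) = n"
  using hermite_poly_degree_lead_coeff by blast

lemma hermite_poly_nonzero: "hermite_poly n \<noteq> 0"
  using hermite_poly_degree_lead_coeff[of n] by auto

lemma hermite_poly_pcompose_minus:
  "hermite_poly n \<circ>\<^sub>p [:0, -1:] = smult ((-1) ^ n) (hermite_poly n)"
proof (induction n)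
  case 0
  show ?case by (simp add: one_pCons pcompose_pCons)
next
  case (Suc n)
  have "pderiv (hermite_poly n \<circ>\<^sub>p [:0, -1:]) = (pderiv (hermite_poly n) \<circ>\<^sub>p [:0, -1:]) * [:-1:]"
    by (simp add: pderiv_pcompose pderiv_pCons)
  then have "pderiv (hermite_poly n) \<circ>\<^sub>p [:0, -1:] = - smult ((-1) ^ n) (pderiv (hermite_poly n))"
    using Suc.IH by (simp add: pderiv_smult)
  moreover have "[:0, 2:] \<circ>\<^sub>p [:0, -1:] = - [:0, 2 :: real:]"
    by (simp add: pcompose_pCons)
  ultimately have "hermite_poly (Suc n) \<circ>\<^sub>p [:0, -1:] =
      - [:0, 2:] * smult ((-1) ^ n) (hermite_poly n) + smult ((-1) ^ n) (pderiv (hermite_poly n))"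
    using Suc.IH by (simp only: hermite_poly.simps pcompose_diff pcompose_mult)
  then show ?case
    by (simp only: hermite_poly.simps) (simp add: algebra_simps smult_diff_right)
qed

lemma hermite_minus: "hermite n (- y) = (-1) ^ n * hermite n y"
  using arg_cong[OF hermite_poly_pcompose_minus, of "\<lambda>p. poly p y" n]
  by (simp add: hermite_eq_poly poly_pcompose)

lemma hermite_zero_minus_iff: "hermite n (- y) = 0 \<longleftrightarrow> hermite n y = 0"
  by (simp add: hermite_minus)

lemma tendsto_power_times_exp_neg_square_at_top:
  "((\<lambda>t::real. t ^ i * exp (- (t^2))) \<longlongrightarrow> 0) at_top"
proof -
  have "((\<lambda>t::real. t ^ i / exp t * exp (t - t^2)) \<longlongrightarrow> 0 * 0) at_top"
    by (intro tendsto_mult tendsto_power_div_exp_0) real_asymp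
  then show ?thesis
    by (simp add: exp_diff exp_minus field_simps)
qed

lemma tendsto_poly_times_exp_neg_square_at_top:
  "((\<lambda>t::real. poly p t * exp (- (t^2))) \<longlongrightarrow> 0) at_top"
proof -
  have "((\<lambda>t. \<Sum>i\<le>degree p. coeff p i * (t ^ i * exp (- (t^2)))) \<longlongrightarrow> 0) at_top"
    by (intro tendsto_null_sum tendsto_mult_right_zero tendsto_power_times_exp_neg_square_at_top)
  then show ?thesis
    by (simp add: poly_altdef sum_distrib_right mult.assoc)
qed

lemma tendsto_poly_times_exp_neg_square_at_bot:
  "((\<lambda>t::real. poly p t * exp (- (t^2))) \<longlongrightarrow> 0) at_bot"
  using filterlim_compose[OF tendsto_poly_times_exp_neg_square_at_top[of "p \<circ>\<^sub>p [:0, -1:]"]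
      filterlim_uminus_at_top_at_bot]
  by (simp add: poly_pcompose)

section \<open>Counting zeros with Rolle's theorem\<close>

lemma Rolle_DERIV:
  fixes f f' :: "real \<Rightarrow> real"
  assumes D: "\<And>t. (f has_real_derivative f' t) (at t)" and "a < b" "f a = f b"
  shows "\<exists>u. a < u \<and> u < b \<and> f' u = 0"
proof -
  have "continuous_on {a..b} f"
    using D by (intro continuous_at_imp_continuous_on ballI DERIV_isCont)
  then obtain u where "a < u" "u < b" "(\<lambda>v. f' u * v) = (\<lambda>v. 0)"
    using Rolle_deriv[of a b f "\<lambda>x v. f' x * v"] assms by (auto simp: has_field_derivative_def)
  then show ?thesis
    by (metis mult_cancel_left1)
qed

lemma critical_point_left_of_zero_pos:
  fixes f f' :: "real \<Rightarrow> real"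
  assumes D: "\<And>t. (f has_real_derivative f' t) (at t)" and lim: "(f \<longlongrightarrow> 0) at_bot"
    and "f r = 0" "t < r" "0 < f t"
  shows "\<exists>u<r. f' u = 0"
proof -
  have cont: "\<forall>x. isCont f x"
    using D DERIV_isCont by blast
  obtain N where N: "\<And>x. x \<le> N \<Longrightarrow> f x < f t / 2"
    using order_tendstoD(2)[OF lim, of "f t / 2"] \<open>0 < f t\<close> by (auto simp: eventually_at_bot_linorder)
  define s where "s = min N (t - 1)"
  have "s \<le> t" "f s < f t / 2"
    using N[of s] by (auto simp: s_def)
  then obtain u where u: "u \<le> t" "f u = f t / 2"
    using IVT[of f s "f t / 2" t] cont \<open>0 < f t\<close> by auto
  obtain w where w: "t \<le> w" "w \<le> r" "f w = f t / 2"
    using IVT2[of f r "f t / 2" t] cont assms by auto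
  have "u < w"
    using u w \<open>0 < f t\<close> by (cases "u = t") auto
  then obtain z where "u < z" "z < w" "f' z = 0"
    using Rolle_DERIV[OF D] u w by metis
  with w(2) show ?thesis
    using less_le_trans by blast
qed

lemma critical_point_left_of_zero:
  fixes f f' :: "real \<Rightarrow> real"
  assumes D: "\<And>t. (f has_real_derivative f' t) (at t)" and lim: "(f \<longlongrightarrow> 0) at_bot"
    and fin: "finite {x. f x = 0}" and r: "f r = 0"
  shows "\<exists>u<r. f' u = 0"
proof -
  have "{..<r} - {x. f x = 0} \<noteq> {}"
    using Diff_infinite_finite[OF fin infinite_Iio] by (rule infinite_imp_nonempty)
  then obtain t where t: "t < r" "f t \<noteq> 0"
    by blast
  show ?thesis
  proof (cases "0 < f t")
    case True
    then show ?thesis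
      using critical_point_left_of_zero_pos[OF D lim r t(1)] by blast
  next
    case False
    have "((\<lambda>x. - f x) has_real_derivative - f' x) (at x)" for x
      using D by (rule DERIV_minus)
    moreover have "((\<lambda>x. - f x) \<longlongrightarrow> 0) at_bot"
      using tendsto_minus[OF lim] by simp
    ultimately have "\<exists>u<r. - f' u = 0"
      using critical_point_left_of_zero_pos[of "\<lambda>x. - f x" "\<lambda>x. - f' x" r t] r t False by force
    then show ?thesis
      by simp
  qed
qed

lemma critical_point_right_of_zero:
  fixes f f' :: "real \<Rightarrow> real"
  assumes D: "\<And>t. (f has_real_derivative f' t) (at t)" and lim: "(f \<longlongrightarrow> 0) at_top"
    and fin: "finite {x. f x = 0}" and r: "f r = 0"
  shows "\<exists>u>r. f' u = 0"
proof -
  have "((\<lambda>x. f (- x)) has_real_derivative - f' (- x)) (at x)" for x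
    using D[of "- x"] DERIV_mirror by blast
  moreover have "((\<lambda>x. f (- x)) \<longlongrightarrow> 0) at_bot"
    using filterlim_compose[OF lim filterlim_uminus_at_top_at_bot] .
  moreover have "{x. f (- x) = 0} = uminus ` {x. f x = 0}"
    by (force simp: image_iff)
  ultimately have "\<exists>u. u < - r \<and> - f' (- u) = 0"
    using critical_point_left_of_zero[of "\<lambda>x. f (- x)" "\<lambda>x. - f' (- x)" "- r"] fin r by simp
  then obtain u where "u < - r" "f' (- u) = 0"
    by auto
  then show ?thesis
    by (intro exI[of _ "- u"]) auto
qed

lemma card_critical_points_between_zeros:
  fixes f f' :: "real \<Rightarrow> real"
  assumes D: "\<And>t. (f has_real_derivative f' t) (at t)"
    and "finite S" "S \<noteq> {}" "S \<subseteq> {x. f x = 0}"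
  shows "\<exists>T. finite T \<and> card T + 1 = card S \<and> T \<subseteq> {Min S<..<Max S} \<inter> {x. f' x = 0}"
  using assms(2-4)
proof (induction S rule: finite_linorder_max_induct)
  case empty
  then show ?case by simp
next
  case (insert b A)
  show ?case
  proof (cases "A = {}")
    case True
    then show ?thesis by auto
  next
    case False
    with insert obtain T where T: "finite T" "card T + 1 = card A"
        "T \<subseteq> {Min A<..<Max A} \<inter> {x. f' x = 0}"
      by auto
    have "Max A < b"
      using insert False by simp
    moreover have "f (Max A) = 0" "f b = 0"
      using insert Max_in[OF insert.hyps(1) False] by auto
    ultimately obtain u where u: "Max A < u" "u < b" "f' u = 0"
      using Rolle_DERIV[OF D] by metis
    have "u \<notin> T" "b \<notin> A"
      using T(3) u(1) insert.hyps(2) by auto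
    then have card: "card (insert u T) + 1 = card (insert b A)"
      using T(1,2) insert.hyps(1) by simp
    have "Min A < u"
      using Min_le[OF insert.hyps(1) Max_in[OF insert.hyps(1) False]] u(1) by linarith
    moreover have "Min (insert b A) = Min A" "Max (insert b A) = b"
      using insert False \<open>Max A < b\<close> \<open>Min A < u\<close> u(2) by auto
    ultimately have "insert u T \<subseteq> {Min (insert b A)<..<Max (insert b A)} \<inter> {x. f' x = 0}"
      using T(3) u by auto
    with card T(1) show ?thesis
      by blast
  qed
qed

lemma card_zeros_less_card_critical_points:
  fixes f f' :: "real \<Rightarrow> real"
  assumes D: "\<And>t. (f has_real_derivative f' t) (at t)"
    and lim_bot: "(f \<longlongrightarrow> 0) at_bot" and lim_top: "(f \<longlongrightarrow> 0) at_top"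
    and fin: "finite {x. f x = 0}" and ne: "{x. f x = 0} \<noteq> {}" and fin': "finite {x. f' x = 0}"
  shows "card {x. f x = 0} + 1 \<le> card {x. f' x = 0}"
proof -
  let ?Z = "{x. f x = 0}"
  obtain T where T: "finite T" "card T + 1 = card ?Z" "T \<subseteq> {Min ?Z<..<Max ?Z} \<inter> {x. f' x = 0}"
    using card_critical_points_between_zeros[OF D fin ne] by blast
  obtain u where u: "u < Min ?Z" "f' u = 0"
    using critical_point_left_of_zero[OF D lim_bot fin] Min_in[OF fin ne] by blast
  obtain w where w: "Max ?Z < w" "f' w = 0"
    using critical_point_right_of_zero[OF D lim_top fin] Max_in[OF fin ne] by blast
  have "Min ?Z \<le> Max ?Z"
    using Min_le[OF fin Max_in[OF fin ne]] .
  then have "u \<notin> T" "w \<notin> T" "u \<noteq> w"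
    using T(3) u w by auto
  then have "card (insert u (insert w T)) = card T + 2"
    using T(1) by simp
  moreover have "card (insert u (insert w T)) \<le> card {x. f' x = 0}"
    using T u w by (intro card_mono[OF fin']) auto
  ultimately show ?thesis
    using T(2) by linarith
qed

lemma card_hermite_poly_roots: "card {x. poly (hermite_poly n) x = 0} = n"
proof (induction n)
  case 0
  show ?case by simp
next
  case (Suc n)
  show ?case
  proof (cases "n = 0")
    case True
    have "{x. poly (hermite_poly (Suc 0)) x = 0} = {0}"
      by auto
    with True show ?thesis by simp
  next
    case False
    let ?Z = "\<lambda>n. {x. poly (hermite_poly n) x = 0}"
    have zeros: "{x. poly (hermite_poly n) x * exp (- (x^2)) = 0} = ?Z n"
      "{x. - (poly (hermite_poly (Suc n)) x * exp (- (x^2))) = 0} = ?Z (Suc n)"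
      by simp_all
    have "?Z n \<noteq> {}"
      using Suc.IH False by (metis card.empty)
    then have "card (?Z n) + 1 \<le> card (?Z (Suc n))"
      unfolding zeros[symmetric]
      by (intro card_zeros_less_card_critical_points DERIV_hermite_poly_times_exp_neg_square
          tendsto_poly_times_exp_neg_square_at_bot tendsto_poly_times_exp_neg_square_at_top)
        (simp_all only: zeros poly_roots_finite[OF hermite_poly_nonzero] not_False_eq_True)
    moreover have "card (?Z (Suc n)) \<le> Suc n"
      using card_poly_roots_bound[OF hermite_poly_nonzero, of "Suc n"]
      by (simp only: degree_hermite_poly)
    ultimately show ?thesis
      using Suc.IH by linarith
  qed
qed

section \<open>Real-rooted polynomials away from their zeros\<close>

lemma prod_linear_factors_dvd:
  fixes p :: "real poly"
  assumes "finite R" "R \<subseteq> {x. poly p x = 0}"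
  shows "(\<Prod>r\<in>R. [:-r, 1:]) dvd p"
  using assms
proof (induction R rule: finite_induct)
  case empty
  show ?case by simp
next
  case (insert r R)
  then obtain s where s: "p = (\<Prod>r\<in>R. [:-r, 1:]) * s"
    by auto
  have "poly (\<Prod>r\<in>R. [:-r, 1:]) r \<noteq> 0"
    using insert.hyps by (auto simp: poly_prod)
  with s insert.prems have "[:-r, 1:] dvd s"
    by (simp add: poly_eq_0_iff_dvd)
  then have "(\<Prod>r\<in>R. [:-r, 1:]) * [:-r, 1:] dvd p"
    unfolding s by (rule mult_dvd_mono[OF dvd_refl])
  then show ?case
    by (simp only: prod.insert[OF insert.hyps] mult.commute)
qed

lemma poly_eq_const_times_prod_roots:
  fixes p :: "real poly"
  assumes p: "p \<noteq> 0" and card: "card {x. poly p x = 0} = degree p"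
  obtains c where "c \<noteq> 0" "\<And>y. poly p y = c * (\<Prod>r\<in>{x. poly p x = 0}. y - r)"
proof -
  define R where "R = {x. poly p x = 0}"
  define q where "q = (\<Prod>r\<in>R. [:-r, 1:])"
  have fin: "finite R"
    unfolding R_def using poly_roots_finite[OF p] .
  obtain s where s: "p = q * s"
    using prod_linear_factors_dvd[OF fin] unfolding q_def R_def by auto
  with p have "s \<noteq> 0" "q \<noteq> 0"
    by auto
  moreover have "degree q = card R"
    unfolding q_def by (subst degree_prod_sum_eq) auto
  ultimately have "degree s = 0"
    using s card degree_mult_eq[of q s] unfolding R_def by simp
  then obtain c where c: "s = [:c:]"
    by (auto elim: degree_eq_zeroE)
  have "c \<noteq> 0"
    using c \<open>s \<noteq> 0\<close> by simp
  moreover have "poly p y = c * (\<Prod>r\<in>R. y - r)" for y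
    unfolding s c q_def by (simp add: poly_prod)
  ultimately show ?thesis
    using that unfolding R_def by blast
qed

lemma finite_set_separated:
  fixes R :: "real set"
  assumes "finite R"
  obtains g where "g > 0" "\<And>r s. r \<in> R \<Longrightarrow> s \<in> R \<Longrightarrow> r \<noteq> s \<Longrightarrow> g \<le> \<bar>r - s\<bar>"
proof -
  define D where "D = (\<lambda>(r, s). \<bar>r - s\<bar>) ` (R \<times> R - Id)"
  have fin: "finite (insert 1 D)"
    unfolding D_def using assms by simp
  have "\<forall>d\<in>insert 1 D. 0 < d"
    unfolding D_def by auto
  then have "0 < Min (insert 1 D)"
    using fin by simp
  moreover have "Min (insert 1 D) \<le> \<bar>r - s\<bar>" if "r \<in> R" "s \<in> R" "r \<noteq> s" for r s
  proof -
    have "\<bar>r - s\<bar> \<in> D"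
      unfolding D_def using that by (intro image_eqI[of _ _ "(r, s)"]) auto
    then show ?thesis
      using fin by simp
  qed
  ultimately show ?thesis
    using that by blast
qed

lemma prod_dist_lower_bound:
  fixes R :: "real set"
  assumes fin: "finite R" and ne: "R \<noteq> {}" and \<kappa>: "0 < \<kappa>" "2 * \<kappa> \<le> g"
    and sep: "\<And>r s. r \<in> R \<Longrightarrow> s \<in> R \<Longrightarrow> r \<noteq> s \<Longrightarrow> g \<le> \<bar>r - s\<bar>"
    and far: "\<And>r. r \<in> R \<Longrightarrow> \<kappa> \<le> \<bar>y - r\<bar>"
  shows "\<kappa> * (g / 2) ^ (card R - 1) \<le> (\<Prod>r\<in>R. \<bar>y - r\<bar>)"
proof -
  obtain r0 where r0: "r0 \<in> R" "\<And>r. r \<in> R - {r0} \<Longrightarrow> g / 2 \<le> \<bar>y - r\<bar>"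
  proof (cases "\<exists>r0\<in>R. \<bar>y - r0\<bar> < g / 2")
    case True
    then obtain r0 where "r0 \<in> R" "\<bar>y - r0\<bar> < g / 2"
      by blast
    moreover have "g / 2 \<le> \<bar>y - r\<bar>" if "r \<in> R - {r0}" for r
    proof -
      have "g \<le> \<bar>r - r0\<bar>"
        using sep[of r r0] that calculation(1) by blast
      then show ?thesis
        using calculation(2) by linarith
    qed
    ultimately show ?thesis
      by (intro that[of r0])
  next
    case False
    obtain r0 where "r0 \<in> R"
      using ne by blast
    with False show ?thesis
      by (intro that[of r0]) (auto simp: not_less)
  qed
  have "\<kappa> * (g / 2) ^ (card R - 1) = \<kappa> * (\<Prod>r\<in>R - {r0}. g / 2)"
    using fin r0(1) by (simp add: card_Diff_singleton)
  also have "\<dots> \<le> \<bar>y - r0\<bar> * (\<Prod>r\<in>R - {r0}. \<bar>y - r\<bar>)"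
    using \<kappa> r0 far by (intro mult_mono prod_mono prod_nonneg) auto
  also have "\<dots> = (\<Prod>r\<in>R. \<bar>y - r\<bar>)"
    using fin r0(1) by (simp add: prod.remove)
  finally show ?thesis .
qed

lemma real_rooted_poly_lower_bound:
  fixes p :: "real poly"
  assumes "p \<noteq> 0" "card {x. poly p x = 0} = degree p" "0 < degree p"
  obtains C g where "0 < C" "0 < g"
    "\<And>\<kappa> y. 0 < \<kappa> \<Longrightarrow> 2 * \<kappa> \<le> g \<Longrightarrow> (\<And>r. poly p r = 0 \<Longrightarrow> \<kappa> \<le> \<bar>y - r\<bar>) \<Longrightarrow>
       C * \<kappa> \<le> \<bar>poly p y\<bar>"
proof -
  define R where "R = {x. poly p x = 0}"
  have fin: "finite R"
    unfolding R_def using poly_roots_finite[OF assms(1)] .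
  have "card R = degree p"
    unfolding R_def using assms(2) .
  with assms(3) have ne: "R \<noteq> {}"
    by auto
  obtain c where c: "c \<noteq> 0" "\<And>y. poly p y = c * (\<Prod>r\<in>R. y - r)"
    using poly_eq_const_times_prod_roots[OF assms(1,2), folded R_def] by blast
  obtain g where g: "0 < g" "\<And>r s. r \<in> R \<Longrightarrow> s \<in> R \<Longrightarrow> r \<noteq> s \<Longrightarrow> g \<le> \<bar>r - s\<bar>"
    using finite_set_separated[OF fin] by blast
  show ?thesis
  proof (rule that[of "\<bar>c\<bar> * (g / 2) ^ (card R - 1)" g])
    show "0 < \<bar>c\<bar> * (g / 2) ^ (card R - 1)"
      using c g by simp
    show "\<bar>c\<bar> * (g / 2) ^ (card R - 1) * \<kappa> \<le> \<bar>poly p y\<bar>"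
      if "0 < \<kappa>" "2 * \<kappa> \<le> g" "\<And>r. poly p r = 0 \<Longrightarrow> \<kappa> \<le> \<bar>y - r\<bar>" for \<kappa> y
    proof -
      have "\<kappa> \<le> \<bar>y - r\<bar>" if "r \<in> R" for r
        using that \<open>\<And>r. poly p r = 0 \<Longrightarrow> \<kappa> \<le> \<bar>y - r\<bar>\<close> unfolding R_def by blast
      then have "\<kappa> * (g / 2) ^ (card R - 1) \<le> (\<Prod>r\<in>R. \<bar>y - r\<bar>)"
        using prod_dist_lower_bound[OF fin ne that(1,2) g(2)] by blast
      then have "\<bar>c\<bar> * (\<kappa> * (g / 2) ^ (card R - 1)) \<le> \<bar>c\<bar> * (\<Prod>r\<in>R. \<bar>y - r\<bar>)"
        by (rule mult_left_mono) simp
      then show ?thesis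
        by (simp add: c(2) abs_mult abs_prod mult_ac)
    qed
  qed (use g in auto)
qed

section \<open>The nonnegative zeros z_j\<close>

lemma finite_hermite_zeros: "finite {y. hermite n y = 0}"
  using poly_roots_finite[OF hermite_poly_nonzero] by (simp add: hermite_eq_poly)

lemma finite_nonneg_hermite_zeros: "finite {y. 0 \<le> y \<and> hermite n y = 0}"
  by (rule finite_subset[OF _ finite_hermite_zeros]) auto

text \<open>The zero set is symmetric, so n is twice the number of positive zeros, plus one if 0 is a
  zero.\<close>
lemma card_nonneg_hermite_zeros: "card {y. 0 \<le> y \<and> hermite n y = 0} = hk n"
proof -
  define P where "P = {y. 0 < y \<and> hermite n y = 0}"
  define Z where "Z = {y. y = 0 \<and> hermite n y = 0}"
  have fin: "finite P" "finite Z"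
    unfolding P_def Z_def by (auto intro: finite_subset[OF _ finite_hermite_zeros])
  have neg: "uminus ` P = {y. y < 0 \<and> hermite n y = 0}"
  proof (intro equalityI subsetI)
    fix y
    assume "y \<in> {y. y < 0 \<and> hermite n y = 0}"
    then have "- y \<in> P"
      unfolding P_def by (simp add: hermite_zero_minus_iff)
    then show "y \<in> uminus ` P"
      by (rule rev_image_eqI) simp
  qed (auto simp: P_def hermite_zero_minus_iff)
  have "{y. hermite n y = 0} = (P \<union> uminus ` P) \<union> Z"
    unfolding neg unfolding P_def Z_def by auto
  moreover have "card ((P \<union> uminus ` P) \<union> Z) = (card P + card P) + card Z"
  proof -
    have "card (P \<union> uminus ` P) = card P + card (uminus ` P)"
      using fin by (intro card_Un_disjoint) (auto simp: neg P_def)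
    moreover have "card ((P \<union> uminus ` P) \<union> Z) = card (P \<union> uminus ` P) + card Z"
      using fin by (intro card_Un_disjoint) (auto simp: neg P_def Z_def)
    ultimately show ?thesis
      by (simp add: card_image)
  qed
  ultimately have n: "n = 2 * card P + card Z"
    using card_hermite_poly_roots[of n] by (simp add: hermite_eq_poly)
  have "card Z \<le> 1"
    using card_mono[of "{0::real}" Z] by (auto simp: Z_def)
  moreover have "{y. 0 \<le> y \<and> hermite n y = 0} = P \<union> Z"
    unfolding P_def Z_def by auto
  moreover have "card (P \<union> Z) = card P + card Z"
    using fin by (intro card_Un_disjoint) (auto simp: P_def Z_def)
  ultimately show ?thesis
    unfolding hk_def using n by simp presburger
qed

lemma length_hzeros: "length (hzeros n) = hk n"
  using card_nonneg_hermite_zeros by (simp add: hzeros_def)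

lemma set_hzeros: "set (hzeros n) = {y. 0 \<le> y \<and> hermite n y = 0}"
  unfolding hzeros_def using finite_nonneg_hermite_zeros by simp

lemma hz_nonneg_zero:
  assumes "1 \<le> j" "j \<le> hk n"
  shows "0 \<le> hz n j" "hermite n (hz n j) = 0"
proof -
  have "hz n j \<in> set (hzeros n)"
    unfolding hz_def using assms length_hzeros[of n] by simp
  then show "0 \<le> hz n j" "hermite n (hz n j) = 0"
    unfolding set_hzeros by auto
qed

lemma hz_strict_mono:
  assumes "1 \<le> i" "i < j" "j \<le> hk n"
  shows "hz n i < hz n j"
proof -
  have "sorted_wrt (<) (hzeros n)"
    unfolding hzeros_def by (rule strict_sorted_list_of_set)
  then show ?thesis
    unfolding hz_def using sorted_wrt_nth_less[of "(<)" "hzeros n" "i - 1" "j - 1"] assms length_hzeros[of n]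
    by simp
qed

lemma hz_mono:
  assumes "1 \<le> i" "i \<le> j" "j \<le> hk n"
  shows "hz n i \<le> hz n j"
  using hz_strict_mono[of i j n] assms by (cases "i = j") auto

lemma nonneg_hermite_zero_eq_hz:
  assumes "0 \<le> r" "hermite n r = 0"
  obtains j where "1 \<le> j" "j \<le> hk n" "r = hz n j"
proof -
  have "r \<in> set (hzeros n)"
    unfolding set_hzeros using assms by simp
  then obtain i where "i < hk n" "r = hzeros n ! i"
    by (auto simp: in_set_conv_nth length_hzeros)
  then show ?thesis
    using that[of "Suc i"] by (simp add: hz_def)
qed

lemma hermite_zero_not_between:
  assumes "1 \<le> j" "j < hk n" "hermite n r = 0"
  shows "r \<le> hz n j \<or> hz n (Suc j) \<le> r"
proof (cases "0 \<le> r")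
  case True
  then obtain i where "1 \<le> i" "i \<le> hk n" "r = hz n i"
    using nonneg_hermite_zero_eq_hz assms(3) by blast
  then show ?thesis
    using hz_mono[of i j n] hz_mono[of "Suc j" i n] assms by (cases "i \<le> j") auto
next
  case False
  then show ?thesis
    using hz_nonneg_zero(1)[of j n] assms by simp
qed

lemma hermite_zero_abs_bounds:
  assumes "hermite n r = 0"
  shows "hz n 1 \<le> \<bar>r\<bar>" "\<bar>r\<bar> \<le> hz n (hk n)"
proof -
  have "hermite n \<bar>r\<bar> = 0"
    using assms by (cases "0 \<le> r") (auto simp: hermite_zero_minus_iff)
  then obtain i where "1 \<le> i" "i \<le> hk n" "\<bar>r\<bar> = hz n i"
    using nonneg_hermite_zero_eq_hz by (metis abs_ge_zero)
  then show "hz n 1 \<le> \<bar>r\<bar>" "\<bar>r\<bar> \<le> hz n (hk n)"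
    using hz_mono by auto
qed

section \<open>Small scales and the rescaling factors \<beta>_j\<close>

text \<open>Since \<beta>_j \<le> 2^j, these conditions guarantee \<beta>_{j-1} \<kappa> \<le> z_j whenever z_j > 0, so that the
  floor defining a_j is at least 1, and \<beta>_k \<kappa> \<le> 1.\<close>
definition small_scale :: "nat \<Rightarrow> real \<Rightarrow> bool" where
  "small_scale n \<kappa> \<longleftrightarrow> 0 < \<kappa> \<and> 2 ^ hk n * \<kappa> \<le> 1 \<and>
     (\<forall>j\<in>{1..hk n}. 0 < hz n j \<longrightarrow> 2 ^ hk n * \<kappa> \<le> hz n j)"

lemma eventually_small_scale: "eventually (small_scale n) (at_right 0)"
proof -
  have lim: "((\<lambda>\<kappa>. 2 ^ hk n * \<kappa>) \<longlongrightarrow> 0) (at_right (0::real))"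
    by (rule tendsto_mult_right_zero[OF tendsto_ident_at])
  have small: "eventually (\<lambda>\<kappa>. 2 ^ hk n * \<kappa> \<le> c) (at_right 0)" if "0 < c" for c :: real
    using order_tendstoD(2)[OF lim that] by (rule eventually_mono) simp
  have "eventually (\<lambda>\<kappa>. \<forall>j\<in>{1..hk n}. 0 < hz n j \<longrightarrow> 2 ^ hk n * \<kappa> \<le> hz n j) (at_right 0)"
    using small by (intro eventually_ball_finite) (auto intro: eventually_mono)
  then show ?thesis
    unfolding small_scale_def using eventually_at_right_less[of 0] small[of 1]
    by (intro eventually_conj) simp_all
qed

lemma floor_rescale_bounds:
  fixes z b \<kappa> :: real
  assumes "0 < \<kappa>" "0 < b" "b * \<kappa> \<le> z"
  defines "m \<equiv> \<lfloor>z / (b * \<kappa>)\<rfloor>"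
  shows "1 \<le> m" "b \<le> z / (\<kappa> * m)" "z / (\<kappa> * m) \<le> 2 * b"
proof -
  have bk: "0 < b * \<kappa>"
    using assms by simp
  have "1 \<le> z / (b * \<kappa>)"
    using assms bk by simp
  then show m: "1 \<le> m"
    unfolding m_def by linarith
  have "m \<le> z / (b * \<kappa>)"
    unfolding m_def by (rule of_int_floor_le)
  then have "m * (b * \<kappa>) \<le> z"
    by (simp only: pos_le_divide_eq[OF bk])
  then show "b \<le> z / (\<kappa> * m)"
    using assms m by (simp add: pos_le_divide_eq mult_ac)
  have "z / (b * \<kappa>) < of_int m + 1"
    unfolding m_def by (rule real_of_int_floor_add_one_gt)
  then have "z < (of_int m + 1) * (b * \<kappa>)"
    by (simp only: pos_divide_less_eq[OF bk])
  also have "\<dots> \<le> (2 * of_int m) * (b * \<kappa>)"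
    using m bk by (intro mult_right_mono) auto
  finally show "z / (\<kappa> * m) \<le> 2 * b"
    using assms m by (simp add: pos_divide_le_eq mult_ac)
qed

lemma hab_bounds:
  assumes "small_scale n \<kappa>" "1 \<le> j" "j \<le> hk n"
  shows "1 \<le> snd (hab n \<kappa> j) \<and> snd (hab n \<kappa> j) \<le> 2 ^ j \<and>
    \<kappa> * of_int (fst (hab n \<kappa> j) - 1) * snd (hab n \<kappa> j) = hz n j"
  using assms(2,3)
proof (induction j rule: nat_induct_at_least)
  case base
  have \<kappa>: "0 < \<kappa>" "2 ^ hk n * \<kappa> \<le> hz n 1 \<or> hz n 1 = 0"
    using assms hz_nonneg_zero(1)[of 1 n] base by (auto simp: small_scale_def)
  show ?case
  proof (cases "hz n 1 = 0")
    case True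
    then show ?thesis
      by simp
  next
    case False
    have "1 * \<kappa> \<le> 2 ^ hk n * \<kappa>"
      using \<kappa> by (intro mult_right_mono) auto
    then have "1 * \<kappa> \<le> hz n 1"
      using \<kappa> False by linarith
    note bounds = floor_rescale_bounds[OF \<kappa>(1) zero_less_one this, unfolded mult_1]
    define m where "m = \<lfloor>hz n 1 / \<kappa>\<rfloor>"
    have "hab n \<kappa> 1 = (m + 1, hz n 1 / (\<kappa> * m))"
      using False by (simp add: m_def)
    with bounds \<kappa>(1) show ?thesis
      unfolding m_def[symmetric] by simp
  qed
next
  case (Suc j)
  define b where "b = snd (hab n \<kappa> j)"
  have b: "1 \<le> b" "b \<le> 2 ^ j"
    using Suc by (simp_all add: b_def)
  have \<kappa>: "0 < \<kappa>"
    using assms(1) by (simp add: small_scale_def)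
  have "0 \<le> hz n 1" "hz n 1 < hz n (Suc j)"
    using hz_nonneg_zero(1)[of 1 n] hz_strict_mono[of 1 "Suc j" n] Suc by auto
  then have "2 ^ hk n * \<kappa> \<le> hz n (Suc j)"
    using assms(1) Suc by (auto simp: small_scale_def)
  moreover have "b * \<kappa> \<le> 2 ^ hk n * \<kappa>"
  proof (rule mult_right_mono)
    have "(2::real) ^ j \<le> 2 ^ hk n"
      by (rule power_increasing) (use Suc in auto)
    with b show "b \<le> 2 ^ hk n"
      by linarith
  qed (use \<kappa> in simp)
  ultimately have "b * \<kappa> \<le> hz n (Suc j)"
    by linarith
  moreover have "0 < b"
    using b(1) by simp
  moreover define m where "m = \<lfloor>hz n (Suc j) / (b * \<kappa>)\<rfloor>"
  ultimately have bounds: "1 \<le> m" "b \<le> hz n (Suc j) / (\<kappa> * m)" "hz n (Suc j) / (\<kappa> * m) \<le> 2 * b"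
    using floor_rescale_bounds[OF \<kappa>] by simp_all
  obtain i where "j = Suc i"
    using Suc.hyps not0_implies_Suc by force
  then have "hab n \<kappa> (Suc j) = (m + 1, hz n (Suc j) / (\<kappa> * m))"
    by (simp add: Let_def b_def m_def)
  with bounds b \<kappa> show ?case
    using order_trans[OF b(1) bounds(2)] by simp
qed

lemma hbeta_ha_bounds:
  assumes "small_scale n \<kappa>" "1 \<le> j" "j \<le> hk n"
  shows "1 \<le> hbeta n \<kappa> (int j)" "hbeta n \<kappa> (int j) \<le> 2 ^ j"
    "\<kappa> * of_int (ha n \<kappa> j - 1) * hbeta n \<kappa> (int j) = hz n j"
  using hab_bounds[OF assms] assms(2) by (simp_all add: hbeta_def ha_def)

section \<open>Sample points away from the zeros\<close>

lemma hk_pos: "1 \<le> n \<Longrightarrow> 1 \<le> hk n"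
  unfolding hk_def by presburger

lemma hbeta_uminus: "hbeta n \<kappa> (- j) = hbeta n \<kappa> j"
  by (simp add: hbeta_def)

definition away_from_zeros :: "nat \<Rightarrow> real \<Rightarrow> real \<Rightarrow> bool" where
  "away_from_zeros n \<kappa> y \<longleftrightarrow> (\<forall>r. hermite n r = 0 \<longrightarrow> \<kappa> \<le> \<bar>y - r\<bar>) \<and> \<bar>y\<bar> \<le> hz n (hk n) + 1"

lemma away_from_zeros_uminus: "away_from_zeros n \<kappa> (- y) \<longleftrightarrow> away_from_zeros n \<kappa> y"
proof -
  have "\<bar>- y - r\<bar> = \<bar>y - (- r)\<bar>" for r :: real
    by linarith
  then have "(\<forall>r. hermite n r = 0 \<longrightarrow> \<kappa> \<le> \<bar>- y - r\<bar>) \<longleftrightarrow> (\<forall>r. hermite n (- r) = 0 \<longrightarrow> \<kappa> \<le> \<bar>y - r\<bar>)"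
    by (metis minus_minus)
  then show ?thesis
    by (simp add: away_from_zeros_def hermite_zero_minus_iff)
qed

lemma away_from_zeros_hI_pos:
  assumes \<kappa>: "small_scale n \<kappa>" and j: "1 \<le> j" "j < hk n" and x: "x \<in> hI n \<kappa> (int j)"
  shows "away_from_zeros n \<kappa> (hbeta n \<kappa> (int j) * \<kappa> * x)"
proof -
  define \<beta> where "\<beta> = hbeta n \<kappa> (int j)"
  have \<beta>: "1 \<le> \<beta>" "\<kappa> * of_int (ha n \<kappa> j - 1) * \<beta> = hz n j"
    using hbeta_ha_bounds[OF \<kappa> j(1)] j(2) by (simp_all add: \<beta>_def)
  have "0 < \<kappa>"
    using \<kappa> by (simp add: small_scale_def)
  then have \<beta>\<kappa>: "0 < \<beta> * \<kappa>" "\<kappa> \<le> \<beta> * \<kappa>"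
    using \<beta>(1) by simp_all
  have x_bounds: "ha n \<kappa> j \<le> x" "x \<le> \<lfloor>hz n (Suc j) / (\<beta> * \<kappa>)\<rfloor> - 1"
    using x j by (auto simp: hI_def hb_def hbeta_def \<beta>_def)
  have "hz n j + \<beta> * \<kappa> = \<beta> * \<kappa> * of_int (ha n \<kappa> j)"
    using \<beta>(2) by (simp add: algebra_simps)
  also have "\<dots> \<le> \<beta> * \<kappa> * x"
    by (rule mult_left_mono) (use x_bounds(1) \<beta>\<kappa>(1) in simp_all)
  finally have lower: "hz n j + \<beta> * \<kappa> \<le> \<beta> * \<kappa> * x" .
  have "of_int x \<le> hz n (Suc j) / (\<beta> * \<kappa>) - 1"
    using x_bounds(2) of_int_floor_le[of "hz n (Suc j) / (\<beta> * \<kappa>)"] by linarith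
  then have "\<beta> * \<kappa> * x \<le> \<beta> * \<kappa> * (hz n (Suc j) / (\<beta> * \<kappa>) - 1)"
    by (rule mult_left_mono) (use \<beta>\<kappa>(1) in simp)
  also have "\<dots> = hz n (Suc j) - \<beta> * \<kappa>"
    using \<beta>(1) \<open>0 < \<kappa>\<close> by (simp add: right_diff_distrib)
  finally have upper: "\<beta> * \<kappa> * x \<le> hz n (Suc j) - \<beta> * \<kappa>" .
  have "\<kappa> \<le> \<bar>\<beta> * \<kappa> * x - r\<bar>" if "hermite n r = 0" for r
    using hermite_zero_not_between[OF j that] lower upper \<beta>\<kappa> by auto
  moreover have "0 \<le> hz n j" "hz n (Suc j) \<le> hz n (hk n)"
    using hz_nonneg_zero(1)[of j n] hz_mono[of "Suc j" "hk n" n] j by auto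
  ultimately show ?thesis
    unfolding away_from_zeros_def \<beta>_def[symmetric] using lower upper \<beta>\<kappa> by auto
qed

lemma away_from_zeros_hI_zero:
  assumes \<kappa>: "small_scale n \<kappa>" and n: "1 \<le> n" and x: "x \<in> hI n \<kappa> 0"
  shows "away_from_zeros n \<kappa> (hbeta n \<kappa> 0 * \<kappa> * x)"
proof -
  have "0 < \<kappa>"
    using \<kappa> by (simp add: small_scale_def)
  have "\<bar>x\<bar> \<le> \<lfloor>hz n 1 / \<kappa>\<rfloor> - 1"
    using x by (auto simp: hI_def ha_def Let_def split: if_splits)
  then have "\<bar>of_int x\<bar> \<le> hz n 1 / \<kappa> - 1"
    using of_int_floor_le[of "hz n 1 / \<kappa>"] by linarith
  then have "\<kappa> * \<bar>of_int x\<bar> \<le> \<kappa> * (hz n 1 / \<kappa> - 1)"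
    using \<open>0 < \<kappa>\<close> by simp
  then have y: "\<bar>\<kappa> * x\<bar> \<le> hz n 1 - \<kappa>"
    using \<open>0 < \<kappa>\<close> by (simp add: abs_mult right_diff_distrib)
  have "\<kappa> \<le> \<bar>\<kappa> * x - r\<bar>" if "hermite n r = 0" for r
    using hermite_zero_abs_bounds(1)[OF that] y by linarith
  moreover have "hz n 1 \<le> hz n (hk n)"
    using hz_mono[of 1 "hk n" n] hk_pos[OF n] by simp
  ultimately show ?thesis
    unfolding away_from_zeros_def hbeta_def using y \<open>0 < \<kappa>\<close> by simp
qed

lemma away_from_zeros_ha_last:
  assumes \<kappa>: "small_scale n \<kappa>" and n: "1 \<le> n"
  shows "away_from_zeros n \<kappa> (hbeta n \<kappa> (int (hk n)) * \<kappa> * ha n \<kappa> (hk n))"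
proof -
  define \<beta> where "\<beta> = hbeta n \<kappa> (int (hk n))"
  have \<beta>: "1 \<le> \<beta>" "\<beta> \<le> 2 ^ hk n" "\<kappa> * of_int (ha n \<kappa> (hk n) - 1) * \<beta> = hz n (hk n)"
    using hbeta_ha_bounds[OF \<kappa> hk_pos[OF n]] by (simp_all add: \<beta>_def)
  have \<kappa>': "0 < \<kappa>" "2 ^ hk n * \<kappa> \<le> 1"
    using \<kappa> by (simp_all add: small_scale_def)
  have y: "\<beta> * \<kappa> * ha n \<kappa> (hk n) = hz n (hk n) + \<beta> * \<kappa>"
    using \<beta>(3) by (simp add: algebra_simps)
  have "\<beta> * \<kappa> \<le> 2 ^ hk n * \<kappa>"
    using \<beta>(2) \<kappa>'(1) by (intro mult_right_mono) auto
  then have "\<beta> * \<kappa> \<le> 1"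
    using \<kappa>'(2) by linarith
  moreover have "\<kappa> \<le> \<beta> * \<kappa>"
    using \<beta>(1) \<kappa>'(1) by simp
  moreover have "\<kappa> \<le> \<bar>hz n (hk n) + \<beta> * \<kappa> - r\<bar>" if "hermite n r = 0" for r
    using hermite_zero_abs_bounds(2)[OF that] \<open>\<kappa> \<le> \<beta> * \<kappa>\<close> by linarith
  moreover have "0 \<le> hz n (hk n)"
    using hz_nonneg_zero(1)[OF hk_pos[OF n] order_refl] .
  ultimately show ?thesis
    unfolding away_from_zeros_def \<beta>_def[symmetric] y using \<kappa>'(1) by simp
qed

lemma away_from_zeros_hI:
  assumes \<kappa>: "small_scale n \<kappa>" and n: "1 \<le> n" and j: "\<bar>j\<bar> \<le> int (hk n) - 1" and x: "x \<in> hI n \<kappa> j"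
  shows "away_from_zeros n \<kappa> (hbeta n \<kappa> j * \<kappa> * x)"
proof (cases j "0::int" rule: linorder_cases)
  case less
  then have minus_x: "- x \<in> hI n \<kappa> (int (nat (- j)))"
    using x j by (auto simp: hI_def)
  have "away_from_zeros n \<kappa> (hbeta n \<kappa> (int (nat (- j))) * \<kappa> * of_int (- x))"
    by (intro away_from_zeros_hI_pos[OF \<kappa> _ _ minus_x]) (use less j in auto)
  then show ?thesis
    using less by (simp add: hbeta_uminus away_from_zeros_uminus)
next
  case equal
  then show ?thesis
    using away_from_zeros_hI_zero[OF \<kappa> n] x by simp
next
  case greater
  then show ?thesis
    using away_from_zeros_hI_pos[OF \<kappa>, of "nat j"] x j by simp
qed

lemma finite_hI:
  assumes "\<bar>j\<bar> \<le> int (hk n) - 1"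
  shows "finite (hI n \<kappa> j)"
proof -
  have "nat \<bar>j\<bar> \<noteq> hk n"
    using assms by auto
  then have "\<exists>lo hi. hI n \<kappa> j \<subseteq> {lo..hi}"
    unfolding hI_def by (auto split: if_splits simp: subset_iff)
  then obtain lo hi where "hI n \<kappa> j \<subseteq> {lo..hi}"
    by blast
  then show ?thesis
    using finite_subset by blast
qed

lemma hermite_gauss_lower_bound:
  assumes "1 \<le> n"
  obtains c g where "0 < c" "0 < g"
    "\<And>\<kappa> y. 0 < \<kappa> \<Longrightarrow> 2 * \<kappa> \<le> g \<Longrightarrow> away_from_zeros n \<kappa> y \<Longrightarrow> c * \<kappa> \<le> \<bar>hermite n y\<bar> * gauss y"
proof -
  obtain C g where C: "0 < C" "0 < g"
    "\<And>\<kappa> y. 0 < \<kappa> \<Longrightarrow> 2 * \<kappa> \<le> g \<Longrightarrow> (\<And>r. poly (hermite_poly n) r = 0 \<Longrightarrow> \<kappa> \<le> \<bar>y - r\<bar>) \<Longrightarrow>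
       C * \<kappa> \<le> \<bar>poly (hermite_poly n) y\<bar>"
    using real_rooted_poly_lower_bound[OF hermite_poly_nonzero, of n] assms
    unfolding card_hermite_poly_roots degree_hermite_poly by auto
  define B where "B = hz n (hk n) + 1"
  show ?thesis
  proof (rule that[of "C * exp (- (B^2) / 2)" g])
    show "C * exp (- (B^2) / 2) * \<kappa> \<le> \<bar>hermite n y\<bar> * gauss y"
      if "0 < \<kappa>" "2 * \<kappa> \<le> g" "away_from_zeros n \<kappa> y" for \<kappa> y
    proof -
      have "\<bar>y\<bar> \<le> \<bar>B\<bar>"
        using that(3) abs_ge_self[of B] by (simp add: away_from_zeros_def B_def)
      then have "y^2 \<le> B^2"
        by (simp add: abs_le_square_iff)
      then have "exp (- (B^2) / 2) \<le> gauss y"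
        by (simp add: gauss_def)
      moreover have "C * \<kappa> \<le> \<bar>hermite n y\<bar>"
        using C(3)[OF that(1,2)] that(3) by (simp add: away_from_zeros_def hermite_eq_poly)
      ultimately have "(C * \<kappa>) * exp (- (B^2) / 2) \<le> \<bar>hermite n y\<bar> * gauss y"
        by (intro mult_mono) auto
      then show ?thesis
        by (simp add: mult_ac)
    qed
  qed (use C in simp_all)
qed

lemma eventually_hpsi_lower_bound:
  assumes "1 \<le> n"
  obtains c where "0 < c"
    "eventually (\<lambda>\<kappa>. small_scale n \<kappa> \<and>
       (\<forall>j x. away_from_zeros n \<kappa> (hbeta n \<kappa> j * \<kappa> * x) \<longrightarrow> c * \<kappa> \<le> hpsi n \<kappa> j x)) (at_right 0)"
proof -
  obtain c g where c: "0 < c" "0 < g" and bound: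
    "\<And>\<kappa> y. 0 < \<kappa> \<Longrightarrow> 2 * \<kappa> \<le> g \<Longrightarrow> away_from_zeros n \<kappa> y \<Longrightarrow> c * \<kappa> \<le> \<bar>hermite n y\<bar> * gauss y"
    using hermite_gauss_lower_bound[OF assms] by blast
  have "((\<lambda>\<kappa>. 2 * \<kappa>) \<longlongrightarrow> 0) (at_right (0::real))"
    by (rule tendsto_mult_right_zero[OF tendsto_ident_at])
  then have "eventually (\<lambda>\<kappa>. 2 * \<kappa> < g) (at_right 0)"
    using c(2) by (rule order_tendstoD(2))
  with eventually_small_scale have "eventually (\<lambda>\<kappa>. small_scale n \<kappa> \<and> 2 * \<kappa> < g) (at_right 0)"
    by (rule eventually_conj)
  then have "eventually (\<lambda>\<kappa>. small_scale n \<kappa> \<and>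
      (\<forall>j x. away_from_zeros n \<kappa> (hbeta n \<kappa> j * \<kappa> * x) \<longrightarrow> c * \<kappa> \<le> hpsi n \<kappa> j x)) (at_right 0)"
    by (rule eventually_mono) (auto simp: hpsi_def small_scale_def intro: bound)
  with c(1) that show ?thesis
    by blast
qed

lemma hpsi_lower_bounds_at_scale:
  assumes n: "1 \<le> n" and \<kappa>: "small_scale n \<kappa>"
    and psi: "\<forall>j x. away_from_zeros n \<kappa> (hbeta n \<kappa> j * \<kappa> * x) \<longrightarrow> c * \<kappa> \<le> hpsi n \<kappa> j x"
  shows "(\<forall>j. \<bar>j\<bar> \<le> int (hk n) - 1 \<and> hI n \<kappa> j \<noteq> {} \<longrightarrow> Min (hpsi n \<kappa> j ` hI n \<kappa> j) \<ge> c * \<kappa>)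
    \<and> hpsi n \<kappa> (int (hk n)) (ha n \<kappa> (hk n)) \<ge> c * \<kappa>
    \<and> hpsi n \<kappa> (- int (hk n)) (- ha n \<kappa> (hk n)) \<ge> c * \<kappa>"
proof (intro conjI allI impI)
  show "c * \<kappa> \<le> Min (hpsi n \<kappa> j ` hI n \<kappa> j)" if "\<bar>j\<bar> \<le> int (hk n) - 1 \<and> hI n \<kappa> j \<noteq> {}" for j
  proof (rule Min.boundedI)
    show "finite (hpsi n \<kappa> j ` hI n \<kappa> j)"
      using finite_hI that by blast
    show "c * \<kappa> \<le> y" if "y \<in> hpsi n \<kappa> j ` hI n \<kappa> j" for y
      using that psi away_from_zeros_hI[OF \<kappa> n] \<open>\<bar>j\<bar> \<le> int (hk n) - 1 \<and> hI n \<kappa> j \<noteq> {}\<close> by blast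
  qed (use that in blast)
  show "c * \<kappa> \<le> hpsi n \<kappa> (int (hk n)) (ha n \<kappa> (hk n))"
    using psi away_from_zeros_ha_last[OF \<kappa> n] by blast
  have "away_from_zeros n \<kappa> (hbeta n \<kappa> (- int (hk n)) * \<kappa> * of_int (- ha n \<kappa> (hk n)))"
    using away_from_zeros_ha_last[OF \<kappa> n] by (simp add: hbeta_uminus away_from_zeros_uminus)
  then show "c * \<kappa> \<le> hpsi n \<kappa> (- int (hk n)) (- ha n \<kappa> (hk n))"
    using psi by blast
qed

theorem lemma2p8:
  fixes n :: nat
  assumes "n \<ge> 1"
  shows "\<exists>c>0. \<exists>\<kappa>0>0. \<forall>\<kappa>::real. 0 < \<kappa> \<and> \<kappa> < \<kappa>0 \<longrightarrow>
           (\<forall>j::int. \<bar>j\<bar> \<le> int (hk n) - 1 \<and> hI n \<kappa> j \<noteq> {} \<longrightarrow>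
               Min (hpsi n \<kappa> j ` hI n \<kappa> j) \<ge> c * \<kappa>)
         \<and> hpsi n \<kappa> (int (hk n)) (ha n \<kappa> (hk n)) \<ge> c * \<kappa>
         \<and> hpsi n \<kappa> (- int (hk n)) (- ha n \<kappa> (hk n)) \<ge> c * \<kappa>"
proof -
  obtain c where "0 < c" and "eventually (\<lambda>\<kappa>. small_scale n \<kappa> \<and>
      (\<forall>j x. away_from_zeros n \<kappa> (hbeta n \<kappa> j * \<kappa> * x) \<longrightarrow> c * \<kappa> \<le> hpsi n \<kappa> j x)) (at_right 0)"
    using eventually_hpsi_lower_bound[OF assms] by blast
  then obtain \<kappa>0 where "0 < \<kappa>0" and \<kappa>0: "\<And>\<kappa>. 0 < \<kappa> \<Longrightarrow> \<kappa> < \<kappa>0 \<Longrightarrow> small_scale n \<kappa> \<and>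
      (\<forall>j x. away_from_zeros n \<kappa> (hbeta n \<kappa> j * \<kappa> * x) \<longrightarrow> c * \<kappa> \<le> hpsi n \<kappa> j x)"
    unfolding eventually_at_right_field by blast
  show ?thesis
    by (rule exI[of _ c], rule conjI[OF \<open>0 < c\<close>], rule exI[of _ \<kappa>0], rule conjI[OF \<open>0 < \<kappa>0\<close>])
      (use hpsi_lower_bounds_at_scale[OF assms] \<kappa>0 in blast)
qed

end
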